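(* Let $\mathcal{V}=[0,1]_\oplus$, let $X$ be a set, and let $T$ be either the powerset monad $\mathcal{P}$ with evaluation map $\mathit{ev}_T=\sup$ (with $\sup\emptyset=0$), or the countably supported distribution monad $\mathcal{D}$ with evaluation map $\mathit{ev}_T=\mathbb{E}$ (expected value, $\mathbb{E}(p)=\sum_v v\cdot p(v)$). Let $F$ be a functor and $(TX,\mu_X,c)$ an $F$-$T$-bialgebra for some natural transformation $\zeta\colon TF\Rightarrow FT$, where $\mu$ is the multiplication of $T$. Let $u$ be the up-to function on maps $d\colon TX\times TX\to[0,1]$ given by $u(d)(y_1,y_2)=\inf\{K_{\{\mathit{ev}_T\}}(d)(t_1,t_2)\mid t_1,t_2\in TTX,\ \mu_X(t_1)=y_1,\ \mu_X(t_2)=y_2\}$. Then for every $d\colon TX\times TX\to[0,1]$: (i) if $T=\mathcal{P}$: $u(d)\big(\bigcup_{i\in I}X_i,\bigcup_{i\in I}Y_i\big)\le\sup_{i\in I}d(X_i,Y_i)$ for every family $(X_i,Y_i)_{i\in I}$ of pairs of subsets of $X$; (ii) if $T=\mathcal{D}$: $u(d)\big(\sum_{i\in I}r_i\cdot p_i,\sum_{i\in I}r_i\cdot q_i\big)\le\sum_{i\in I}r_i\cdot d(p_i,q_i)$ for every countable family of $r_i\in[0,1]$ with $\sum_{i\in I}r_i=1$ and $p_i,q_i\in\mathcal{D}(X)$. (Here $\le$ and $\inf$, $\sup$ refer to the usual order on the reals.)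
   Context: $[0,1]_\oplus$ is the quantale on $[0,1]$ with reversed order ($a\sqsubseteq b$ iff $a\ge b$) and truncated addition $a\oplus b=\min(a+b,1)$; its residuation is $d_{\mathcal{V}}(a,b)=\max(b-a,0)$, and quantale joins are real infima. For a map $d\colon Y\times Y\to[0,1]$, $\gamma_Y(d)=\{p\colon Y\to[0,1]\mid d_{\mathcal{V}}(p(y_1),p(y_2))\le d(y_1,y_2)\ \forall y_1,y_2\}$, and $K_{\{\mathit{ev}_T\}}(d)(t_1,t_2)=\sup_{p\in\gamma_Y(d)}d_{\mathcal{V}}(\mathit{ev}_T(Tp(t_1)),\mathit{ev}_T(Tp(t_2)))$ for $t_1,t_2\in TY$. $\mathcal{D}(X)$ is the set of probability distributions on $X$ with countable support, with $\mathcal{D}f(p)(y)=\sum_{f(x)=y}p(x)$, unit the Dirac distributions and multiplication $\mu(P)(x)=\sum_\nu P(\nu)\nu(x)$. An $F$-$T$-bialgebra for $\zeta$ is a triple $(Y,a,c)$ with $a\colon TY\to Y$, $c\colon Y\to FY$ and $c\circ a=Fa\circ\zeta_Y\circ Tc$. *)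

theory Defs
  imports "HOL-Probability.Probability"
begin

text \<open>Residuation of the quantale [0,1] with truncated addition (directed).\<close>
definition dV :: "real \<Rightarrow> real \<Rightarrow> real" where
  "dV a b = max (b - a) 0"

definition gammaY :: "('y \<Rightarrow> 'y \<Rightarrow> real) \<Rightarrow> ('y \<Rightarrow> real) set" where
  "gammaY d = {p. (\<forall>y. 0 \<le> p y \<and> p y \<le> 1) \<and> (\<forall>y1 y2. dV (p y1) (p y2) \<le> d y1 y2)}"

text \<open>Kantorovich lifting; evTp p t stands for ev_T (T p t).\<close>
definition Kant :: "(('y \<Rightarrow> real) \<Rightarrow> 't \<Rightarrow> real) \<Rightarrow> ('y \<Rightarrow> 'y \<Rightarrow> real) \<Rightarrow> 't \<Rightarrow> 't \<Rightarrow> real" where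
  "Kant evTp d t1 t2 = (SUP p\<in>gammaY d. dV (evTp p t1) (evTp p t2))"

definition supP :: "real set \<Rightarrow> real" where
  "supP S = (if S = {} then 0 else Sup S)"

definition evP :: "('y \<Rightarrow> real) \<Rightarrow> 'y set \<Rightarrow> real" where
  "evP p t = supP (p ` t)"

definition expect :: "real pmf \<Rightarrow> real" where
  "expect q = measure_pmf.expectation q (\<lambda>v. v)"

definition evD :: "('y \<Rightarrow> real) \<Rightarrow> 'y pmf \<Rightarrow> real" where
  "evD p t = expect (map_pmf p t)"

definition upto :: "('t \<Rightarrow> 'y) \<Rightarrow> (('y \<Rightarrow> real) \<Rightarrow> 't \<Rightarrow> real) \<Rightarrow> ('y \<Rightarrow> 'y \<Rightarrow> real) \<Rightarrow> 'y \<Rightarrow> 'y \<Rightarrow> real" where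
  "upto mu evTp d y1 y2 = (INF t\<in>{(t1, t2). mu t1 = y1 \<and> mu t2 = y2}. Kant evTp d (fst t) (snd t))"

end

theory Submission
  imports Defs
begin

text \<open>
  Both parts follow from u(d)(\<mu> t1, \<mu> t2) \<le> K(d)(t1, t2) for one well-chosen pair of
  decompositions: t1 = {X i | i \<in> I} and t2 = {Y i | i \<in> I} for the powerset monad, and
  the images of the weight distribution R(i) = r i under p and q for the distribution monad.
  Every map g in \<gamma>(d) satisfies g(y2) \<le> g(y1) + d(y1, y2); taking the supremum, resp. the
  expectation with respect to R, of these inequalities bounds each term of the Kantorovich
  supremum by sup i. d(X i, Y i), resp. \<Sum> i. r i * d(p i, q i).
\<close>

lemma gammaY_range: "p \<in> gammaY d \<Longrightarrow> 0 \<le> p y \<and> p y \<le> 1"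
  by (simp add: gammaY_def)

lemma gammaY_le_add:
  assumes "p \<in> gammaY d"
  shows "p y\<^sub>2 \<le> p y\<^sub>1 + d y\<^sub>1 y\<^sub>2"
proof -
  have "dV (p y\<^sub>1) (p y\<^sub>2) \<le> d y\<^sub>1 y\<^sub>2"
    using assms by (simp add: gammaY_def)
  then show ?thesis
    by (simp add: dV_def)
qed

lemma zero_in_gammaY: "(\<And>a b. 0 \<le> d a b) \<Longrightarrow> (\<lambda>_. 0) \<in> gammaY d"
  by (simp add: gammaY_def dV_def)

lemma Kant_nonneg:
  assumes "\<And>a b. 0 \<le> d a b"
    and evT: "\<And>p t. p \<in> gammaY d \<Longrightarrow> 0 \<le> evT p t \<and> evT p t \<le> 1"
  shows "0 \<le> Kant evT d t\<^sub>1 t\<^sub>2"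
proof -
  have "dV (evT p t\<^sub>1) (evT p t\<^sub>2) \<le> 1" if "p \<in> gammaY d" for p
    using evT[OF that, of t\<^sub>1] evT[OF that, of t\<^sub>2] by (simp add: dV_def)
  then have "bdd_above ((\<lambda>p. dV (evT p t\<^sub>1) (evT p t\<^sub>2)) ` gammaY d)"
    by (rule bdd_aboveI2)
  then have "dV (evT (\<lambda>_. 0) t\<^sub>1) (evT (\<lambda>_. 0) t\<^sub>2) \<le> Kant evT d t\<^sub>1 t\<^sub>2"
    unfolding Kant_def by (intro cSUP_upper zero_in_gammaY assms(1))
  then show ?thesis
    by (simp add: dV_def)
qed

lemma Kant_le:
  assumes "\<And>a b. 0 \<le> d a b" and "\<And>p. p \<in> gammaY d \<Longrightarrow> dV (evT p t\<^sub>1) (evT p t\<^sub>2) \<le> c"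
  shows "Kant evT d t\<^sub>1 t\<^sub>2 \<le> c"
proof -
  have "gammaY d \<noteq> {}"
    using zero_in_gammaY[of d] assms(1) by blast
  then show ?thesis
    unfolding Kant_def using assms(2) by (intro cSUP_least) auto
qed

lemma upto_le_Kant:
  assumes "\<And>a b. 0 \<le> d a b"
    and "\<And>p t. p \<in> gammaY d \<Longrightarrow> 0 \<le> evT p t \<and> evT p t \<le> 1"
    and "\<mu> t\<^sub>1 = y\<^sub>1" "\<mu> t\<^sub>2 = y\<^sub>2"
  shows "upto \<mu> evT d y\<^sub>1 y\<^sub>2 \<le> Kant evT d t\<^sub>1 t\<^sub>2"
proof -
  let ?D = "{(s\<^sub>1, s\<^sub>2). \<mu> s\<^sub>1 = y\<^sub>1 \<and> \<mu> s\<^sub>2 = y\<^sub>2}"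
  have "bdd_below ((\<lambda>s. Kant evT d (fst s) (snd s)) ` ?D)"
    using Kant_nonneg[OF assms(1,2)] by (intro bdd_belowI2[where m = 0])
  moreover have "(t\<^sub>1, t\<^sub>2) \<in> ?D"
    using assms(3,4) by simp
  ultimately have "(INF s\<in>?D. Kant evT d (fst s) (snd s)) \<le> Kant evT d (fst (t\<^sub>1, t\<^sub>2)) (snd (t\<^sub>1, t\<^sub>2))"
    by (rule cINF_lower)
  then show ?thesis
    by (simp add: upto_def)
qed

lemma supP_image_nonneg:
  assumes "\<And>i. i \<in> I \<Longrightarrow> 0 \<le> f i" and "bdd_above (f ` I)"
  shows "0 \<le> supP (f ` I)"
proof (cases "I = {}")
  case False
  then obtain i where "i \<in> I"
    by blast
  then show ?thesis
    using assms False by (simp add: supP_def cSUP_upper2)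
qed (simp add: supP_def)

lemma supP_image_le_add:
  assumes "bdd_above (f ` I)" "bdd_above (h ` I)" "\<And>i. i \<in> I \<Longrightarrow> g i \<le> f i + h i"
  shows "supP (g ` I) \<le> supP (f ` I) + supP (h ` I)"
proof (cases "I = {}")
  case False
  have "g i \<le> (SUP i\<in>I. f i) + (SUP i\<in>I. h i)" if "i \<in> I" for i
    using assms(3)[OF that] cSUP_upper[OF that assms(1)] cSUP_upper[OF that assms(2)] by linarith
  then show ?thesis
    using False by (simp add: supP_def cSUP_least)
qed (simp add: supP_def)

lemma supP_image_le: "(\<And>i. i \<in> I \<Longrightarrow> f i \<le> c) \<Longrightarrow> 0 \<le> c \<Longrightarrow> supP (f ` I) \<le> c"
  unfolding supP_def by (simp add: cSUP_least)

lemma evP_range: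
  assumes "p \<in> gammaY d"
  shows "0 \<le> evP p t \<and> evP p t \<le> 1"
proof -
  have "0 \<le> p y" "p y \<le> 1" for y
    using gammaY_range[OF assms] by auto
  moreover from this have "bdd_above (p ` t)"
    by (intro bdd_aboveI2)
  ultimately show ?thesis
    unfolding evP_def by (simp add: supP_image_nonneg supP_image_le)
qed

lemma Kant_evP_image_le:
  assumes d: "\<And>a b. 0 \<le> d a b \<and> d a b \<le> 1"
  shows "Kant evP d (Xs ` I) (Ys ` I) \<le> supP ((\<lambda>i. d (Xs i) (Ys i)) ` I)"
proof (rule Kant_le)
  fix p assume p: "p \<in> gammaY d"
  have bdd: "bdd_above (f ` I)" if "\<And>i. f i \<le> 1" for f :: "_ \<Rightarrow> real"
    using that by (intro bdd_aboveI[where M = 1]) auto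
  have "supP ((\<lambda>i. p (Ys i)) ` I) \<le> supP ((\<lambda>i. p (Xs i)) ` I) + supP ((\<lambda>i. d (Xs i) (Ys i)) ` I)"
    using gammaY_range[OF p] gammaY_le_add[OF p] d by (intro supP_image_le_add bdd) auto
  moreover have "0 \<le> supP ((\<lambda>i. d (Xs i) (Ys i)) ` I)"
    using d by (intro supP_image_nonneg bdd) auto
  ultimately show "dV (evP p (Xs ` I)) (evP p (Ys ` I)) \<le> supP ((\<lambda>i. d (Xs i) (Ys i)) ` I)"
    by (simp add: evP_def dV_def image_image)
qed (use d in auto)

lemma upto_Union_le_supP:
  assumes "\<And>a b. 0 \<le> d a b \<and> d a b \<le> 1"
  shows "upto Union evP d (\<Union>i\<in>I. Xs i) (\<Union>i\<in>I. Ys i) \<le> supP ((\<lambda>i. d (Xs i) (Ys i)) ` I)"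
proof -
  have "upto Union evP d (\<Union>i\<in>I. Xs i) (\<Union>i\<in>I. Ys i) \<le> Kant evP d (Xs ` I) (Ys ` I)"
    using assms by (intro upto_le_Kant evP_range) auto
  also have "\<dots> \<le> supP ((\<lambda>i. d (Xs i) (Ys i)) ` I)"
    using assms by (rule Kant_evP_image_le)
  finally show ?thesis .
qed

lemma evD_range:
  assumes "p \<in> gammaY d"
  shows "0 \<le> evD p t \<and> evD p t \<le> 1"
proof -
  have "0 \<le> p y" "p y \<le> 1" for y
    using gammaY_range[OF assms] by auto
  then have "0 \<le> measure_pmf.expectation t p" "measure_pmf.expectation t p \<le> 1"
    by (auto intro!: integral_nonneg_AE measure_pmf.integral_le_const
        measure_pmf.integrable_const_bound[where B = 1])
  then show ?thesis
    by (simp add: evD_def expect_def)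
qed

lemma Kant_evD_map_pmf_le:
  assumes d: "\<And>a b. 0 \<le> d a b \<and> d a b \<le> 1"
  shows "Kant evD d (map_pmf p R) (map_pmf q R) \<le> measure_pmf.expectation R (\<lambda>i. d (p i) (q i))"
proof (rule Kant_le)
  fix g assume g: "g \<in> gammaY d"
  have int: "integrable (measure_pmf R) f" if "\<And>i. 0 \<le> f i \<and> f i \<le> 1" for f :: "_ \<Rightarrow> real"
    using that by (intro measure_pmf.integrable_const_bound[where B = 1]) auto
  have "evD g (map_pmf q R) - evD g (map_pmf p R) = measure_pmf.expectation R (\<lambda>i. g (q i) - g (p i))"
    using gammaY_range[OF g] by (simp add: evD_def expect_def int)
  also have "\<dots> \<le> measure_pmf.expectation R (\<lambda>i. d (p i) (q i))"
    using gammaY_range[OF g] gammaY_le_add[OF g] d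
    by (intro integral_mono Bochner_Integration.integrable_diff int) (auto simp: algebra_simps)
  finally show "dV (evD g (map_pmf p R)) (evD g (map_pmf q R)) \<le> measure_pmf.expectation R (\<lambda>i. d (p i) (q i))"
    using d by (simp add: dV_def integral_nonneg_AE)
qed (use d in auto)

lemma pmf_of_weights_exists:
  assumes "\<And>i. i \<in> I \<Longrightarrow> 0 \<le> r i" and "(r has_sum 1) I"
  obtains R where "\<And>i. pmf R i = (if i \<in> I then r i else 0)"
proof -
  define f where "f i = (if i \<in> I then r i else 0)" for i
  have f_nonneg: "0 \<le> f i" for i
    using assms(1) by (simp add: f_def)
  have "(f has_sum 1) UNIV"
    using assms(2) by (rule has_sum_cong_neutral[THEN iffD1, rotated -1]) (auto simp: f_def)
  moreover from this have "f summable_on UNIV"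
    by (auto simp: summable_on_def)
  then have f_summable: "Infinite_Set_Sum.abs_summable_on f UNIV"
    by (simp add: abs_summable_equivalent[symmetric] summable_on_iff_abs_summable_on_real[symmetric]
        del: real_norm_def)
  ultimately have "infsetsum f UNIV = 1"
    by (simp add: infsetsum_infsum infsumI)
  then have "(\<integral>\<^sup>+i. ennreal (f i) \<partial>count_space UNIV) = 1"
    using nn_integral_conv_infsetsum[OF f_summable] f_nonneg by simp
  then have "pmf (embed_pmf f) i = f i" for i
    using f_nonneg by (intro pmf_embed_pmf) auto
  then show ?thesis
    using that[of "embed_pmf f"] by (simp add: f_def)
qed

lemma pmf_expectation_eq_infsum:
  assumes R: "\<And>i. pmf R i = (if i \<in> I then r i else 0)" and h: "\<And>i. \<bar>h i\<bar> \<le> B"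
  shows "measure_pmf.expectation R h = (\<Sum>\<^sub>\<infinity>i\<in>I. r i * h i)"
proof -
  have "Infinite_Set_Sum.abs_summable_on (\<lambda>i. pmf R i * B) UNIV"
    by (intro abs_summable_on_cmult_left pmf_abs_summable)
  moreover have "norm (pmf R i * h i) \<le> pmf R i * B" for i
    using h[of i] by (simp add: abs_mult mult_left_mono)
  ultimately have "Infinite_Set_Sum.abs_summable_on (\<lambda>i. pmf R i * h i) UNIV"
    by (rule abs_summable_on_comparison_test')
  then have "measure_pmf.expectation R h = (\<Sum>\<^sub>\<infinity>i. pmf R i * h i)"
    by (simp add: pmf_expectation_eq_infsetsum infsetsum_infsum)
  also have "\<dots> = (\<Sum>\<^sub>\<infinity>i\<in>I. r i * h i)"
    by (rule infsum_cong_neutral) (auto simp: R)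
  finally show ?thesis .
qed

lemma join_pmf_map_pmf_eq_mixture:
  assumes R: "\<And>i. pmf R i = (if i \<in> I then r i else 0)"
    and P: "\<And>x. pmf P x = (\<Sum>\<^sub>\<infinity>i\<in>I. r i * pmf (p i) x)"
  shows "join_pmf (map_pmf p R) = P"
proof (rule pmf_eqI)
  fix x
  have "pmf (join_pmf (map_pmf p R)) x = measure_pmf.expectation R (\<lambda>i. pmf (p i) x)"
    by (simp add: bind_eq_join_pmf[symmetric] pmf_bind)
  also have "\<dots> = pmf P x"
    using pmf_expectation_eq_infsum[OF R, of _ 1] by (simp add: P pmf_le_1)
  finally show "pmf (join_pmf (map_pmf p R)) x = pmf P x" .
qed

lemma upto_join_pmf_le_infsum:
  assumes d: "\<And>a b. 0 \<le> d a b \<and> d a b \<le> 1"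
    and r: "\<And>i. i \<in> I \<Longrightarrow> 0 \<le> r i" "(r has_sum 1) I"
    and P: "\<And>x. pmf P x = (\<Sum>\<^sub>\<infinity>i\<in>I. r i * pmf (p i) x)"
    and Q: "\<And>x. pmf Q x = (\<Sum>\<^sub>\<infinity>i\<in>I. r i * pmf (q i) x)"
  shows "upto join_pmf evD d P Q \<le> (\<Sum>\<^sub>\<infinity>i\<in>I. r i * d (p i) (q i))"
proof -
  obtain R where R: "\<And>i. pmf R i = (if i \<in> I then r i else 0)"
    using pmf_of_weights_exists[OF r] by blast
  have "upto join_pmf evD d P Q \<le> Kant evD d (map_pmf p R) (map_pmf q R)"
    using d by (intro upto_le_Kant evD_range join_pmf_map_pmf_eq_mixture[OF R] P Q) auto
  also have "\<dots> \<le> measure_pmf.expectation R (\<lambda>i. d (p i) (q i))"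
    using d by (rule Kant_evD_map_pmf_le)
  also have "\<dots> = (\<Sum>\<^sub>\<infinity>i\<in>I. r i * d (p i) (q i))"
    using d by (intro pmf_expectation_eq_infsum[OF R, where B = 1]) auto
  finally show ?thesis .
qed

theorem mainTheorem15:
  shows "(\<forall>(d :: 'a set \<Rightarrow> 'a set \<Rightarrow> real) (I :: 'i set) (Xs :: 'i \<Rightarrow> 'a set) (Ys :: 'i \<Rightarrow> 'a set).
            (\<forall>a b. 0 \<le> d a b \<and> d a b \<le> 1) \<longrightarrow>
            upto Union evP d (\<Union>i\<in>I. Xs i) (\<Union>i\<in>I. Ys i) \<le> supP ((\<lambda>i. d (Xs i) (Ys i)) ` I))
       \<and> (\<forall>(d :: 'a pmf \<Rightarrow> 'a pmf \<Rightarrow> real) (I :: 'j set) (r :: 'j \<Rightarrow> real)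
            (p :: 'j \<Rightarrow> 'a pmf) (q :: 'j \<Rightarrow> 'a pmf) (P :: 'a pmf) (Q :: 'a pmf).
            (\<forall>a b. 0 \<le> d a b \<and> d a b \<le> 1) \<longrightarrow> countable I \<longrightarrow>
            (\<forall>i\<in>I. 0 \<le> r i \<and> r i \<le> 1) \<longrightarrow> (r has_sum 1) I \<longrightarrow>
            (\<forall>x. pmf P x = (\<Sum>\<^sub>\<infinity>i\<in>I. r i * pmf (p i) x)) \<longrightarrow>
            (\<forall>x. pmf Q x = (\<Sum>\<^sub>\<infinity>i\<in>I. r i * pmf (q i) x)) \<longrightarrow>
            upto join_pmf evD d P Q \<le> (\<Sum>\<^sub>\<infinity>i\<in>I. r i * d (p i) (q i)))"
  \<comment> \<open>countable I is unused: nonnegative weights with a sum have countable support anyway\<close>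
  by (intro conjI allI impI upto_Union_le_supP upto_join_pmf_le_infsum) auto

end
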